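(* For all integers $n,i,k\ge 0$, \[ \binom{n}{i}\binom{n+i}{i}\binom{n}{k}\binom{n+k}{k}=\sum_{j\ge0}\binom{i+k}{i}\binom{j}{j-i,\,j-k,\,i+k-j}\binom{n}{j}\binom{n+j}{j}. \]
   Context: $\binom{n}{k}=0$ unless $0\le k\le n$. The multinomial coefficient $\binom{m}{a,b,c}$ equals $\frac{m!}{a!\,b!\,c!}$ if $a,b,c\ge0$ and $a+b+c=m$, and $0$ otherwise. *)

theory Defs
  imports Main
begin

text \<open>Multinomial coefficient (m; a, b, c) = m!/(a! b! c!) if a,b,c \<ge> 0 and a+b+c = m,
  and 0 otherwise. Arguments are integers so that negative entries give 0.\<close>
definition multinom3 :: "int \<Rightarrow> int \<Rightarrow> int \<Rightarrow> int \<Rightarrow> nat" where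
  "multinom3 m a b c =
     (if a \<ge> 0 \<and> b \<ge> 0 \<and> c \<ge> 0 \<and> a + b + c = m
      then fact (nat m) div (fact (nat a) * fact (nat b) * fact (nat c)) else 0)"

end

theory Submission
  imports Defs Complex_Main
begin

(* Put x = n(n+1) and Q_i(x) = prod_{t<i} (x - t(t+1)).  Since
   (n-t)(n+t+1) = x - t(t+1), one has
       C(n,i) C(n+i,i) (i!)^2 = Q_i(x),
   so the identity is a statement about products Q_i Q_k.  The polynomials
   Q_j satisfy the three-term rule (x - i(i+1)) Q_j = Q_{j+1} + (j-i)(j+i+1) Q_j,
   from which induction on i gives the linearization formula
       Q_i Q_k = sum_{j<=i+k} c(i,k,j) Q_j,
       c(i,k,j) = (i+k)! i! k! / ((j-i)! (j-k)! (i+k-j)! j!),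
   valid in every field of characteristic 0 (reciprocal factorials of negative
   numbers are read as 0).  Finally c(i,k,j)/(i!k!)^2 is identified with
   C(i+k,i) * multinom3 j (j-i) (j-k) (i+k-j) / (j!)^2, and the theorem follows
   by dividing the linearization formula by (i!k!)^2 at x = n(n+1). *)

definition inv_fact :: "int \<Rightarrow> 'a::field_char_0" where
  "inv_fact m = (if m < 0 then 0 else inverse (fact (nat m)))"

lemma inv_fact_neg: "m < 0 \<Longrightarrow> inv_fact m = 0"
  by (simp add: inv_fact_def)

lemma inv_fact_of_nat: "inv_fact (int a) = inverse (fact a)"
  by (simp add: inv_fact_def)

lemma inv_fact_pred: "inv_fact (m - 1) = (of_int m * inv_fact m :: 'a::field_char_0)"
proof (cases "m \<le> 0")
  case True
  then show ?thesis by (cases "m = 0") (auto simp: inv_fact_def)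
next
  case False
  then have "nat m = Suc (nat (m - 1))" "(of_int m :: 'a) = of_nat (nat m)" by simp_all
  then show ?thesis using False
    by (simp add: inv_fact_def field_simps del: of_nat_Suc)
qed

definition qprod :: "'a::comm_ring_1 \<Rightarrow> nat \<Rightarrow> 'a" where
  "qprod x i = (\<Prod>t<i. x - of_nat t * (of_nat t + 1))"

lemma qprod_0 [simp]: "qprod x 0 = 1"
  by (simp add: qprod_def)

lemma qprod_Suc: "qprod x (Suc j) = qprod x j * (x - of_nat j * (of_nat j + 1))"
  by (simp add: qprod_def)

definition lin_coeff :: "nat \<Rightarrow> nat \<Rightarrow> int \<Rightarrow> 'a::field_char_0" where
  "lin_coeff i k j = fact (i + k) * fact i * fact k
     * inv_fact (j - int i) * inv_fact (j - int k) * inv_fact (int i + int k - j) * inv_fact j"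

text \<open>c(i,k,j) vanishes outside 0 <= j <= i+k, so sums over j may be extended freely.\<close>
lemma lin_coeff_outside: "j < 0 \<or> j > int i + int k \<Longrightarrow> (lin_coeff i k j :: 'a::field_char_0) = 0"
  by (auto simp: lin_coeff_def inv_fact_neg)

lemma lin_coeff_0: "(lin_coeff 0 k (int j) :: 'a::field_char_0) = (if j = k then 1 else 0)"
proof (cases "j = k")
  case True
  then show ?thesis by (simp add: lin_coeff_def inv_fact_def field_simps)
next
  case False
  then have "int j - int k < 0 \<or> int k - int j < 0" by linarith
  then show ?thesis using False by (auto simp: lin_coeff_def inv_fact_neg)
qed

text \<open>Pascal-type recurrence for the coefficients, mirroring the three-term rule
  for Q_j; it reduces to (j-k) j + (j+i+1)(i+k+1-j) = (i+k+1)(i+1).\<close>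
lemma lin_coeff_Suc:
  fixes i k :: nat and j :: int
  shows "(lin_coeff (Suc i) k j :: 'a::field_char_0)
     = lin_coeff i k (j - 1) + of_int ((j - int i) * (j + int i + 1)) * lin_coeff i k j"
proof -
  define K :: 'a where "K = fact (i + k) * fact i * fact k"
  define R :: 'a where
    "R = inv_fact (j - int i - 1) * inv_fact (j - int k) * inv_fact (int i + int k + 1 - j) * inv_fact j"
  have pred_jk: "inv_fact (j - 1 - int k) = of_int (j - int k) * (inv_fact (j - int k) :: 'a)"
    using inv_fact_pred[of "j - int k"] by (simp add: algebra_simps)
  have pred_j: "inv_fact (j - 1) = of_int j * (inv_fact j :: 'a)"
    by (rule inv_fact_pred)
  have pred_ji: "of_int (j - int i) * inv_fact (j - int i) = (inv_fact (j - int i - 1) :: 'a)"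
    by (rule inv_fact_pred[symmetric])
  have pred_ikj: "inv_fact (int i + int k - j) = of_int (int i + int k + 1 - j) * (inv_fact (int i + int k + 1 - j) :: 'a)"
    using inv_fact_pred[of "int i + int k + 1 - j"] by (simp add: algebra_simps)
  have int_identity: "(j - int k) * j + (j + int i + 1) * (int i + int k + 1 - j) = int (i + k + 1) * int (i + 1)"
    by (simp add: algebra_simps)
  have "lin_coeff (Suc i) k j = of_int (int (i + k + 1) * int (i + 1)) * K * R"
    unfolding lin_coeff_def K_def R_def by (simp add: algebra_simps)
  also have "\<dots> = of_int ((j - int k) * j) * K * R + of_int ((j + int i + 1) * (int i + int k + 1 - j)) * K * R"
    unfolding int_identity[symmetric] by (simp add: algebra_simps)
  also have "of_int ((j - int k) * j) * K * R = lin_coeff i k (j - 1)"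
    unfolding lin_coeff_def K_def R_def pred_jk pred_j by (simp add: algebra_simps)
  also have "of_int ((j + int i + 1) * (int i + int k + 1 - j)) * K * R
      = of_int ((j - int i) * (j + int i + 1)) * lin_coeff i k j"
    unfolding lin_coeff_def K_def R_def pred_ji[symmetric] pred_ikj by (simp add: algebra_simps)
  finally show ?thesis .
qed

lemma qprod_mult:
  fixes x :: "'a::field_char_0"
  shows "qprod x i * qprod x k = (\<Sum>j\<le>i + k. lin_coeff i k (int j) * qprod x j)"
proof (induction i)
  case 0
  have "(\<Sum>j\<le>k. lin_coeff 0 k (int j) * qprod x j) = (\<Sum>j\<le>k. if j = k then qprod x k else 0)"
    by (rule sum.cong) (auto simp: lin_coeff_0)
  then show ?case by simp
next
  case (Suc i)
  let ?c = "\<lambda>j. of_int ((int j - int i) * (int j + int i + 1)) :: 'a"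
  let ?a = "lin_coeff i k :: int \<Rightarrow> 'a"
  have three_term: "(x - of_nat i * (of_nat i + 1)) * qprod x j = qprod x (Suc j) + ?c j * qprod x j" for j
    by (simp add: qprod_Suc algebra_simps)
  have "qprod x (Suc i) * qprod x k = (x - of_nat i * (of_nat i + 1)) * (qprod x i * qprod x k)"
    by (simp add: qprod_Suc algebra_simps)
  also have "\<dots> = (\<Sum>j\<le>i + k. ?a (int j) * ((x - of_nat i * (of_nat i + 1)) * qprod x j))"
    by (simp add: Suc.IH sum_distrib_left algebra_simps)
  also have "\<dots> = (\<Sum>j\<le>i + k. ?a (int j) * qprod x (Suc j)) + (\<Sum>j\<le>i + k. ?c j * ?a (int j) * qprod x j)"
    unfolding sum.distrib[symmetric] three_term by (simp add: algebra_simps)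
  also have "(\<Sum>j\<le>i + k. ?a (int j) * qprod x (Suc j)) = (\<Sum>j\<le>Suc (i + k). ?a (int j - 1) * qprod x j)"
    by (subst sum.atMost_Suc_shift) (simp add: lin_coeff_outside)
  also have "(\<Sum>j\<le>i + k. ?c j * ?a (int j) * qprod x j) = (\<Sum>j\<le>Suc (i + k). ?c j * ?a (int j) * qprod x j)"
    by (simp add: lin_coeff_outside)
  also have "(\<Sum>j\<le>Suc (i + k). ?a (int j - 1) * qprod x j) + (\<Sum>j\<le>Suc (i + k). ?c j * ?a (int j) * qprod x j)
     = (\<Sum>j\<le>Suc i + k. lin_coeff (Suc i) k (int j) * qprod x j)"
    by (simp add: sum.distrib[symmetric] lin_coeff_Suc algebra_simps)
  finally show ?case .
qed

lemma binom_pair_Suc: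
  "(Suc i * (n choose Suc i)) * (Suc i * ((n + Suc i) choose Suc i))
     = ((n - i) * (n + i + 1)) * ((n choose i) * ((n + i) choose i))"
proof -
  have "Suc i * (n choose Suc i) = (n - i) * (n choose i)"
    using binomial_absorption[of i n] binomial_absorb_comp[of n i] by simp
  moreover have "Suc i * ((n + Suc i) choose Suc i) = (n + i + 1) * ((n + i) choose i)"
    using Suc_times_binomial[of i "n + i"] by simp
  ultimately show ?thesis by (simp only: ac_simps)
qed

lemma binom_pair_qprod:
  "of_nat ((n choose i) * ((n + i) choose i)) * (fact i)^2 = (qprod (of_nat (n * (n + 1))) i :: 'a::{comm_ring_1, ring_char_0})"
proof (induction i)
  case 0
  then show ?case by simp
next
  case (Suc i)
  let ?x = "of_nat (n * (n + 1)) :: 'a"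
  have "of_nat ((n choose Suc i) * ((n + Suc i) choose Suc i)) * (fact (Suc i))^2
      = (of_nat ((Suc i * (n choose Suc i)) * (Suc i * ((n + Suc i) choose Suc i))) :: 'a) * (fact i)^2"
    by (simp add: power2_eq_square algebra_simps)
  also have "\<dots> = of_nat ((n - i) * (n + i + 1)) * (of_nat ((n choose i) * ((n + i) choose i)) * (fact i)^2)"
    by (subst binom_pair_Suc) (simp only: of_nat_mult mult.assoc)
  also have "\<dots> = of_nat ((n - i) * (n + i + 1)) * qprod ?x i"
    by (simp only: Suc.IH)
  also have "\<dots> = qprod ?x (Suc i)"
  proof (cases "i \<le> n")
    case True
    then have diff: "(of_nat (n - i) :: 'a) = of_nat n - of_nat i"
      by (rule of_nat_diff)
    have "(of_nat ((n - i) * (n + i + 1)) :: 'a) = ?x - of_nat i * (of_nat i + 1)"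
      unfolding of_nat_mult diff by (simp add: algebra_simps)
    then show ?thesis by (simp add: qprod_Suc mult.commute)
  next
    case False
    then have "qprod ?x i = 0" unfolding Suc.IH[symmetric] by (simp add: binomial_eq_0)
    then show ?thesis by (simp add: qprod_Suc)
  qed
  finally show ?case .
qed

lemma fact3_dvd: "a + b + c = m \<Longrightarrow> fact a * fact b * fact c dvd (fact m :: nat)"
proof -
  assume m: "a + b + c = m"
  have "m - a = b + c" using m by simp
  then have "fact a * fact (b + c) * (m choose a) = (fact m :: nat)"
    using binomial_fact_lemma[of a m] m by simp
  moreover have "fact b * fact c * ((b + c) choose b) = (fact (b + c) :: nat)"
    using binomial_fact_lemma[of b "b + c"] by simp
  ultimately have "fact m = fact a * fact b * fact c * (((b + c) choose b) * (m choose a))"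
    by (simp add: algebra_simps)
  then show ?thesis by (metis dvd_triv_left)
qed

lemma multinom3_eq_fact_quotient:
  assumes "i \<le> j" "k \<le> j" "j \<le> i + k"
  shows "of_nat (multinom3 (int j) (int j - int i) (int j - int k) (int i + int k - int j))
     = (fact j / (fact (j - i) * fact (j - k) * fact (i + k - j)) :: 'a::field_char_0)"
proof -
  have nats: "nat (int j - int i) = j - i" "nat (int j - int k) = j - k"
    "nat (int i + int k - int j) = i + k - j" "nat (int j) = j"
    using assms by auto
  have "fact (j - i) * fact (j - k) * fact (i + k - j) dvd (fact j :: nat)"
    by (rule fact3_dvd) (use assms in auto)
  then show ?thesis using assms
    by (simp add: multinom3_def nats of_nat_of_nat_div)
qed

lemma lin_coeff_normalized:
  assumes "j \<le> i + k"
  shows "lin_coeff i k (int j) / ((fact i)^2 * (fact k)^2)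
    = (of_nat ((i + k) choose i) * of_nat (multinom3 (int j) (int j - int i) (int j - int k) (int i + int k - int j))
       / (fact j)^2 :: 'a::field_char_0)"
proof (cases "i \<le> j \<and> k \<le> j")
  case True
  have diffs: "int j - int i = int (j - i)" "int j - int k = int (j - k)" "int i + int k - int j = int (i + k - j)"
    using True assms by auto
  have c: "lin_coeff i k (int j)
      = (fact (i + k) * fact i * fact k / (fact (j - i) * fact (j - k) * fact (i + k - j) * fact j) :: 'a)"
    unfolding lin_coeff_def diffs inv_fact_of_nat by (simp add: divide_inverse)
  have b: "(of_nat ((i + k) choose i) :: 'a) = fact (i + k) / (fact i * fact k)"
    using binomial_fact[of i "i + k"] by simp
  have m: "of_nat (multinom3 (int j) (int j - int i) (int j - int k) (int i + int k - int j))
     = (fact j / (fact (j - i) * fact (j - k) * fact (i + k - j)) :: 'a)"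
    using True assms by (rule_tac multinom3_eq_fact_quotient) auto
  show ?thesis
    unfolding c b m by (simp add: divide_simps power2_eq_square)
next
  case False
  then show ?thesis by (auto simp: lin_coeff_def inv_fact_neg multinom3_def)
qed

lemma binom_pair_eq_qprod:
  "(of_nat ((n choose j) * ((n + j) choose j)) :: 'a::field_char_0)
     = qprod (of_nat (n * (n + 1))) j / (fact j)^2"
  using binom_pair_qprod[of n j, where 'a='a] by (simp add: field_simps)

lemma linearization_summand:
  assumes "j \<le> i + k"
  shows "lin_coeff i k (int j) / ((fact i)^2 * (fact k)^2) * qprod (of_nat (n * (n + 1))) j
    = (of_nat (((i + k) choose i)
        * multinom3 (int j) (int j - int i) (int j - int k) (int i + int k - int j)
        * (n choose j) * ((n + j) choose j)) :: 'a::field_char_0)"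
proof -
  let ?M = "multinom3 (int j) (int j - int i) (int j - int k) (int i + int k - int j)"
  let ?x = "of_nat (n * (n + 1)) :: 'a"
  have "lin_coeff i k (int j) / ((fact i)^2 * (fact k)^2) * qprod ?x j
      = of_nat ((i + k) choose i) * of_nat ?M / (fact j)^2 * qprod ?x j"
    using assms by (simp only: lin_coeff_normalized)
  also have "\<dots> = of_nat ((i + k) choose i) * of_nat ?M * of_nat ((n choose j) * ((n + j) choose j))"
    unfolding binom_pair_eq_qprod by simp
  finally show ?thesis by (simp only: of_nat_mult mult.assoc)
qed

theorem mainTheorem3:
  fixes n i k :: nat
  shows "(n choose i) * ((n + i) choose i) * (n choose k) * ((n + k) choose k) =
    (\<Sum>j\<le>i + k. ((i + k) choose i)
        * multinom3 (int j) (int j - int i) (int j - int k) (int i + int k - int j)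
        * (n choose j) * ((n + j) choose j))"
proof -
  let ?x = "real (n * (n + 1))"
  let ?d = "(fact i)^2 * (fact k)^2 :: real"
  have "real ((n choose i) * ((n + i) choose i) * (n choose k) * ((n + k) choose k))
     = real ((n choose i) * ((n + i) choose i)) * real ((n choose k) * ((n + k) choose k))"
    by (simp only: of_nat_mult mult.assoc)
  also have "\<dots> = qprod ?x i * qprod ?x k / ?d"
    unfolding binom_pair_eq_qprod by simp
  also have "\<dots> = (\<Sum>j\<le>i + k. lin_coeff i k (int j) / ?d * qprod ?x j)"
    unfolding qprod_mult sum_divide_distrib by (rule sum.cong) simp_all
  also have "\<dots> = real (\<Sum>j\<le>i + k. ((i + k) choose i)
        * multinom3 (int j) (int j - int i) (int j - int k) (int i + int k - int j)
        * (n choose j) * ((n + j) choose j))"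
    unfolding of_nat_sum by (rule sum.cong[OF refl], rule linearization_summand) simp
  finally show ?thesis by (simp only: of_nat_eq_iff)
qed

end
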